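(* If $X$ and $Y$ are uncountable Polish spaces, then $\mathfrak{s}(X)=\mathfrak{s}(Y)$.
   Context: For infinite sets $U, A$, say $U$ splits $A$ if both $A\cap U$ and $A\setminus U$ are infinite. For a topological space $X$, $\mathfrak{s}(X)$ is the smallest cardinality of a family $\mathcal{U}$ of open subsets of $X$ such that every infinite $A\subseteq X$ is split by some $U\in\mathcal{U}$. *)

theory Defs
  imports "HOL-Analysis.Analysis"
begin

unbundle cardinal_syntax

definition Polish_space :: "'a topology \<Rightarrow> bool" where
  "Polish_space X \<longleftrightarrow> completely_metrizable_space X \<and> separable_space X"

definition splits :: "'a set \<Rightarrow> 'a set \<Rightarrow> bool" where
  "splits U A \<longleftrightarrow> infinite (A \<inter> U) \<and> infinite (A - U)"

definition splitting_family :: "'a topology \<Rightarrow> 'a set set \<Rightarrow> bool" where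
  "splitting_family X \<U> \<longleftrightarrow>
     (\<forall>U\<in>\<U>. openin X U) \<and>
     (\<forall>A. A \<subseteq> topspace X \<and> infinite A \<longrightarrow> (\<exists>U\<in>\<U>. splits U A))"

text \<open>The cardinal s(X): the cardinality of a splitting family of minimal cardinality
  (represented as a cardinal order, compared across types with =o).\<close>
definition splitting_number :: "'a topology \<Rightarrow> 'a set rel" where
  "splitting_number X =
     |SOME \<U>. splitting_family X \<U> \<and> (\<forall>\<V>. splitting_family X \<V> \<longrightarrow> |\<U>| \<le>o |\<V>| )|"

end

theory Submission
  imports Defs
begin

text \<open>
  An uncountable Polish space \<open>Y\<close> contains a copy of the Cantor space \<open>2\<^sup>\<nat>\<close> (a Cantor scheme
  of closed balls inside its perfect kernel), so pulling back along this embedding turns a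
  splitting family of \<open>Y\<close> into one of \<open>2\<^sup>\<nat>\<close> of no larger size. Conversely, if \<open>(q\<^sub>m, p\<^sub>m)\<close>
  enumerates \<open>D \<times> \<rat>\<close> for a countable dense set \<open>D\<close> of a Polish space \<open>X\<close>, then for every real
  \<open>t\<close> the map \<open>y \<mapsto> (d y q\<^sub>m < p\<^sub>m + t)\<^sub>m\<close> from \<open>X\<close> to \<open>2\<^sup>\<nat>\<close> is injective and continuous off
  the spheres \<open>d y q\<^sub>m = p\<^sub>m + t\<close>; a countable set meets these spheres for only countably many
  \<open>t\<close>. Since a set is split as soon as a countably infinite subset is, the preimages of a
  splitting family \<open>\<V>\<close> of \<open>2\<^sup>\<nat>\<close> under these maps for \<open>t\<close> in an uncountable \<open>T\<close> split \<open>X\<close>.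
  Finally \<open>\<V>\<close> is uncountable, because a countable family never splits all subsets of a space
  with a non-isolated point, so \<open>T\<close> can be chosen with \<open>|T \<times> \<V>| \<le> |\<V>|\<close>; hence
  \<open>s(X) \<le> s(Y)\<close>, and equality follows by symmetry.
\<close>

section \<open>Splitting families and the splitting number\<close>

lemma splits_subset: "splits U B \<Longrightarrow> B \<subseteq> A \<Longrightarrow> splits U A"
  unfolding splits_def by (meson Diff_mono Int_mono infinite_super order_refl)

lemma splits_inj_preimage:
  assumes "inj_on f A" "splits V (f ` A)" "\<And>a. a \<in> A \<Longrightarrow> a \<in> W \<longleftrightarrow> f a \<in> V"
  shows "splits W A"
proof -
  have "f ` (A \<inter> W) = f ` A \<inter> V" "f ` (A - W) = f ` A - V"
    using assms(3) by auto
  then show ?thesis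
    using assms(2) unfolding splits_def by (metis finite_imageI)
qed

lemma splitting_familyI_countable:
  assumes "\<And>U. U \<in> \<U> \<Longrightarrow> openin X U"
    and "\<And>A. A \<subseteq> topspace X \<Longrightarrow> countable A \<Longrightarrow> infinite A \<Longrightarrow> \<exists>U\<in>\<U>. splits U A"
  shows "splitting_family X \<U>"
  unfolding splitting_family_def
proof (intro conjI ballI allI impI)
  fix A assume "A \<subseteq> topspace X \<and> infinite A"
  moreover obtain C where "C \<subseteq> A" "countable C" "infinite C"
    using calculation infinite_countable_subset' by blast
  ultimately show "\<exists>U\<in>\<U>. splits U A"
    using assms(2)[of C] splits_subset by blast
qed (use assms(1) in blast)

lemma ex_card_of_minimal:
  assumes "P x"
  shows "\<exists>y. P y \<and> (\<forall>z. P z \<longrightarrow> |y| \<le>o |z| )"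
proof -
  have "|x| \<in> {|y| | y. P y}"
    using assms by blast
  then obtain m where m: "m \<in> {|y| | y. P y}" "\<And>r. (r, m) \<in> ordLess \<Longrightarrow> r \<notin> {|y| | y. P y}"
    using wf_eq_minimal[THEN iffD1, OF wf_ordLess] by (metis (lifting))
  then obtain y where y: "P y" "m = |y|"
    by blast
  have "|y| \<le>o |z|" if "P z" for z
  proof -
    have "\<not> |z| <o |y|"
      using m(2)[of "|z|"] y(2) that by blast
    then show ?thesis
      using ordLess_or_ordLeq[OF card_of_Well_order card_of_Well_order] by blast
  qed
  then show ?thesis
    using y(1) by blast
qed

lemma splitting_number_minimal:
  assumes "splitting_family X \<U>"
  obtains \<V> where "splitting_family X \<V>" "splitting_number X = |\<V>|"
    "\<And>\<W>. splitting_family X \<W> \<Longrightarrow> |\<V>| \<le>o |\<W>|"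
proof -
  define \<V> where "\<V> = (SOME \<V>. splitting_family X \<V> \<and> (\<forall>\<W>. splitting_family X \<W> \<longrightarrow> |\<V>| \<le>o |\<W>| ))"
  have "splitting_family X \<V> \<and> (\<forall>\<W>. splitting_family X \<W> \<longrightarrow> |\<V>| \<le>o |\<W>| )"
    unfolding \<V>_def using ex_card_of_minimal[of "splitting_family X", OF assms] by (rule someI_ex)
  moreover have "splitting_number X = |\<V>|"
    unfolding splitting_number_def \<V>_def ..
  ultimately show ?thesis
    using that by blast
qed

lemma splitting_number_ordLeq:
  assumes "splitting_family Y \<V>\<^sub>0"
    and "\<And>\<V>. splitting_family Y \<V> \<Longrightarrow> \<exists>\<U>. splitting_family X \<U> \<and> |\<U>| \<le>o |\<V>|"
  shows "splitting_number X \<le>o splitting_number Y"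
proof -
  obtain \<V> where \<V>: "splitting_family Y \<V>" "splitting_number Y = |\<V>|"
    using splitting_number_minimal[OF assms(1)] .
  then obtain \<U> where \<U>: "splitting_family X \<U>" "|\<U>| \<le>o |\<V>|"
    using assms(2) by blast
  obtain \<U>' where \<U>': "splitting_number X = |\<U>'|" "|\<U>'| \<le>o |\<U>|"
    using splitting_number_minimal[OF \<U>(1)] \<U>(1) by metis
  show ?thesis
    unfolding \<U>'(1) \<V>(2) using \<U>'(2) \<U>(2) by (rule ordLeq_transitive)
qed

lemma ex_uncountable_real_set_ordLeq:
  assumes "uncountable V"
  obtains T :: "real set" where "uncountable T" "|T| \<le>o |V|"
proof (cases "|V| \<le>o |UNIV :: real set|")
  case True
  then obtain h :: "_ \<Rightarrow> real" where "inj_on h V"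
    using card_of_ordLeq[of V "UNIV :: real set"] by blast
  then have "uncountable (h ` V)"
    using assms countable_image_inj_on by blast
  then show ?thesis
    using that card_of_image[of h V] by blast
next
  case False
  then have "|UNIV :: real set| \<le>o |V|"
    using ordLeq_total[OF card_of_Well_order card_of_Well_order] by blast
  then show ?thesis
    using that uncountable_UNIV_real by blast
qed

lemma card_of_Times_ordLeq_infinite:
  "infinite C \<Longrightarrow> |A| \<le>o |C| \<Longrightarrow> |B| \<le>o |C| \<Longrightarrow> |A \<times> B| \<le>o |C|"
  using card_of_Times_ordLeq_infinite_Field[of "|C|"]
  by (simp add: card_of_card_order_on Field_card_of)

section \<open>The Cantor space\<close>

definition Cantor_space :: "(nat \<Rightarrow> bool) topology" where
  "Cantor_space = product_topology (\<lambda>_. discrete_topology UNIV) UNIV"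

lemma topspace_Cantor_space [simp]: "topspace Cantor_space = UNIV"
  by (simp add: Cantor_space_def)

lemma openin_Cantor_space_cylinder: "openin Cantor_space {\<tau>. \<forall>i<n. \<tau> i = \<sigma> i}"
proof -
  have "{\<tau>. \<forall>i<n. \<tau> i = \<sigma> i} = PiE UNIV (\<lambda>i. if i < n then {\<sigma> i} else UNIV)"
    by (auto simp: PiE_def Pi_def)
  moreover have "finite {i. (if i < n then {\<sigma> i} else UNIV) \<noteq> UNIV}"
    by (rule finite_subset[of _ "{..<n}"]) auto
  ultimately show ?thesis
    unfolding Cantor_space_def by (simp add: openin_PiE_gen)
qed

lemma continuous_map_into_discrete_bool:
  fixes P :: "'a \<Rightarrow> bool"
  shows "continuous_map X (discrete_topology UNIV) P \<longleftrightarrow>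
    openin X {x \<in> topspace X. P x} \<and> openin X {x \<in> topspace X. \<not> P x}"
proof
  assume "continuous_map X (discrete_topology UNIV) P"
  then show "openin X {x \<in> topspace X. P x} \<and> openin X {x \<in> topspace X. \<not> P x}"
    using openin_continuous_map_preimage[of X _ P "{True}"]
      openin_continuous_map_preimage[of X _ P "{False}"] by auto
next
  assume op: "openin X {x \<in> topspace X. P x} \<and> openin X {x \<in> topspace X. \<not> P x}"
  have "openin X {x \<in> topspace X. P x \<in> U}" for U
  proof -
    have "U = {} \<or> U = {True} \<or> U = {False} \<or> U = UNIV"
      by (metis (full_types) UNIV_eq_I insertCI subsetI subset_singletonD)
    then show ?thesis
      using op by (elim disjE) auto
  qed
  then show "continuous_map X (discrete_topology UNIV) P"
    by (simp add: continuous_map_def)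
qed

lemma splitting_family_pullback:
  assumes f: "continuous_map (subtopology X S) Y f" "inj_on f S" and "S \<subseteq> topspace X"
    and \<V>: "splitting_family Y \<V>"
  shows "\<exists>\<W>. (\<forall>W\<in>\<W>. openin X W) \<and> |\<W>| \<le>o |\<V>| \<and>
    (\<forall>A. A \<subseteq> S \<and> infinite A \<longrightarrow> (\<exists>W\<in>\<W>. splits W A))"
proof -
  have "\<exists>W. openin X W \<and> {x \<in> S. f x \<in> V} = W \<inter> S" if "V \<in> \<V>" for V
  proof -
    have "openin (subtopology X S) {x \<in> topspace (subtopology X S). f x \<in> V}"
      using f(1) \<V> that openin_continuous_map_preimage unfolding splitting_family_def by blast
    then show ?thesis
      using \<open>S \<subseteq> topspace X\<close> by (simp add: openin_subtopology Int_absorb1)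
  qed
  then obtain W where W: "\<And>V. V \<in> \<V> \<Longrightarrow> openin X (W V) \<and> {x \<in> S. f x \<in> V} = W V \<inter> S"
    by metis
  have "\<exists>W'\<in>W ` \<V>. splits W' A" if A: "A \<subseteq> S" "infinite A" for A
  proof -
    have "f ` A \<subseteq> topspace Y"
      using continuous_map_image_subset_topspace[OF f(1)] A(1) \<open>S \<subseteq> topspace X\<close> by auto
    moreover have "infinite (f ` A)"
      using A finite_imageD inj_on_subset[OF f(2)] by blast
    ultimately obtain V where "V \<in> \<V>" "splits V (f ` A)"
      using \<V> unfolding splitting_family_def by blast
    moreover have "a \<in> W V \<longleftrightarrow> f a \<in> V" if "a \<in> A" for a
      using W[OF \<open>V \<in> \<V>\<close>] that A(1) by blast
    ultimately show ?thesis
      using splits_inj_preimage inj_on_subset[OF f(2) A(1)] by blast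
  qed
  then show ?thesis
    using W card_of_image[of W \<V>] by blast
qed

lemma splitting_family_embedding:
  assumes "continuous_map X Y f" "inj_on f (topspace X)" "splitting_family Y \<V>"
  shows "\<exists>\<W>. splitting_family X \<W> \<and> |\<W>| \<le>o |\<V>|"
  using splitting_family_pullback[of X "topspace X" Y f \<V>] assms
  unfolding splitting_family_def by auto

section \<open>Splitting in metric spaces\<close>

lemma limit_point_nested_sides:
  fixes V :: "nat \<Rightarrow> 'a set"
  assumes "x \<in> X derived_set_of S"
  obtains T where "T 0 = S" "decseq T" "\<forall>n. x \<in> X derived_set_of T n"
    "\<forall>n. T (Suc n) \<subseteq> V n \<or> T (Suc n) \<inter> V n = {}"
proof -
  define T where
    "T = rec_nat S (\<lambda>n R. if x \<in> X derived_set_of (R \<inter> V n) then R \<inter> V n else R - V n)"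
  have T_Suc: "T (Suc n) =
      (if x \<in> X derived_set_of (T n \<inter> V n) then T n \<inter> V n else T n - V n)" for n
    by (simp add: T_def)
  have T_0: "T 0 = S"
    by (simp add: T_def)
  have lim: "x \<in> X derived_set_of T n" for n
  proof (induction n)
    case 0
    then show ?case using assms by (simp add: T_0)
  next
    case (Suc n)
    have "x \<in> X derived_set_of (T n \<inter> V n) \<union> X derived_set_of (T n - V n)"
      using Suc derived_set_of_Un[of X "T n \<inter> V n" "T n - V n"] by (simp add: Int_Diff_Un)
    then show ?case
      unfolding T_Suc by auto
  qed
  have "T (Suc n) = T n \<inter> V n \<or> T (Suc n) = T n - V n" for n
    by (simp add: T_Suc)
  then have sides: "T (Suc n) \<subseteq> V n \<or> T (Suc n) \<inter> V n = {}" for n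
    by blast
  have "decseq T"
    by (rule decseq_SucI) (simp add: T_Suc)
  then show ?thesis
    using that[of T] T_0 lim sides by blast
qed

lemma finite_range_diff_decseq:
  fixes a :: "nat \<Rightarrow> 'a"
  assumes "decseq T" "\<And>k. a k \<in> T k"
  shows "finite (range a - T n)"
proof -
  have "range a - T n \<subseteq> a ` {..<n}"
  proof
    fix y assume "y \<in> range a - T n"
    then obtain k where "y = a k" "a k \<notin> T n"
      by blast
    moreover have "a k \<in> T n" if "n \<le> k"
      using assms decseqD[OF assms(1) that] by blast
    ultimately have "k < n"
      by (meson not_le)
    then show "y \<in> a ` {..<n}"
      using \<open>y = a k\<close> by simp
  qed
  then show ?thesis
    by (rule finite_subset) simp
qed

context Metric_space
begin

lemma limit_point_halving_seq:
  fixes T :: "nat \<Rightarrow> 'a set"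
  assumes "\<And>n. x \<in> mtopology derived_set_of T n"
  shows "\<exists>a. inj a \<and> (\<forall>n. a n \<in> T n \<inter> M \<and> 0 < d x (a n)) \<and>
    (\<forall>m n. m < n \<longrightarrow> d x (a n) < d x (a m) / 2)"
proof -
  define g where "g n e = (SOME y. y \<in> T n \<and> y \<noteq> x \<and> y \<in> mball x e)" for n e
  have g: "g n e \<in> T n \<and> g n e \<noteq> x \<and> g n e \<in> mball x e" if "e > 0" for n e
    unfolding g_def by (rule someI_ex) (use assms[of n] that in \<open>auto simp: metric_derived_set_of\<close>)
  define a where "a = rec_nat (g 0 1) (\<lambda>n y. g (Suc n) (d x y / 2))"
  have a_0: "a 0 = g 0 1" and a_Suc: "a (Suc n) = g (Suc n) (d x (a n) / 2)" for n
    by (simp_all add: a_def)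
  have a: "a n \<in> T n \<inter> M \<and> 0 < d x (a n)" for n
  proof (induction n)
    case 0
    then show ?case using g[of 1 0] by (auto simp: a_0)
  next
    case (Suc n)
    then show ?case using g[of "d x (a n) / 2" "Suc n"] by (auto simp: a_Suc)
  qed
  have halve: "d x (a (Suc n)) < d x (a n) / 2" for n
  proof -
    have "a (Suc n) \<in> mball x (d x (a n) / 2)"
      unfolding a_Suc using a[of n] g[of "d x (a n) / 2" "Suc n"] by simp
    then show ?thesis
      by simp
  qed
  have "d x (a (Suc n)) \<le> d x (a n)" for n
    using halve[of n] a[of n] by linarith
  then have "decseq (\<lambda>n. d x (a n))"
    by (rule decseq_SucI)
  then have lt: "d x (a n) < d x (a m) / 2" if "m < n" for m n
    using halve[of m] decseqD[OF \<open>decseq _\<close>, of "Suc m" n] that by simp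
  have "inj a"
  proof (rule injI)
    fix m n assume "a m = a n"
    moreover have "\<not> d x (a k) < d x (a k) / 2" for k
      using a[of k] by simp
    ultimately show "m = n"
      using lt[of m n] lt[of n m] by (cases m n rule: linorder_cases) auto
  qed
  then show ?thesis
    using a lt by blast
qed

lemma countable_family_not_splitting:
  assumes "x \<in> mtopology derived_set_of S" "countable \<U>"
  obtains A where "A \<subseteq> S" "infinite A" "\<And>U. U \<in> \<U> \<Longrightarrow> \<not> splits U A"
proof -
  \<comment> \<open>an enumeration of \<open>\<U>\<close>; the extra member \<open>{}\<close> keeps it meaningful when \<open>\<U> = {}\<close>\<close>
  define V where "V = from_nat_into (insert {} \<U>)"
  have V: "\<exists>n. V n = U" if "U \<in> \<U>" for U
    unfolding V_def using assms(2) that by (simp add: from_nat_into_surj)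
  obtain T where T: "T 0 = S" "decseq T" "\<forall>n. x \<in> mtopology derived_set_of T n"
    "\<forall>n. T (Suc n) \<subseteq> V n \<or> T (Suc n) \<inter> V n = {}"
    by (rule limit_point_nested_sides[OF assms(1)])
  \<comment> \<open>a sequence through the \<open>T (Suc n)\<close> is eventually inside or eventually outside each \<open>V n\<close>\<close>
  obtain a where a: "inj a" "\<And>n. a n \<in> T (Suc n) \<inter> M"
    using limit_point_halving_seq[of x "\<lambda>n. T (Suc n)"] T(3) by blast
  have "decseq (\<lambda>n. T (Suc n))"
    using T(2) by (simp add: decseq_def)
  then have "finite (range a - T (Suc n))" for n
    using finite_range_diff_decseq[of "\<lambda>n. T (Suc n)" a n] a(2) by blast
  moreover have "range a - V n \<subseteq> range a - T (Suc n) \<or> range a \<inter> V n \<subseteq> range a - T (Suc n)" for n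
    using T(4) by blast
  ultimately have "\<not> splits (V n) (range a)" for n
    unfolding splits_def by (meson finite_subset)
  moreover have "range a \<subseteq> S"
    using a(2) T(1,2) decseqD[of T 0] by blast
  ultimately show ?thesis
    using that[of "range a"] V range_inj_infinite[OF a(1)] by blast
qed

lemma uncountable_splitting_family:
  assumes "mtopology derived_set_of M \<noteq> {}" "splitting_family mtopology \<U>"
  shows "uncountable \<U>"
proof
  assume "countable \<U>"
  then obtain A where "A \<subseteq> M" "infinite A" "\<And>U. U \<in> \<U> \<Longrightarrow> \<not> splits U A"
    using assms(1) countable_family_not_splitting by blast
  then show False
    using assms(2) unfolding splitting_family_def by auto
qed

lemma separated_seq_splits:
  fixes a :: "nat \<Rightarrow> 'a"
  assumes "inj a" "range a \<subseteq> A" "A \<subseteq> M" "\<And>n. 0 < \<rho> n"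
    and "\<And>i j. i \<noteq> j \<Longrightarrow> \<rho> i \<le> d (a i) (a j)"
  shows "\<exists>U. openin mtopology U \<and> splits U A"
proof -
  define U where "U = (\<Union>n. mball (a (2 * n)) (\<rho> (2 * n)))"
  have "a (2 * n) \<in> M" for n
    using assms(2,3) by blast
  then have "a (2 * n) \<in> mball (a (2 * n)) (\<rho> (2 * n))" for n
    using assms(4) by simp
  then have "range (\<lambda>n. a (2 * n)) \<subseteq> A \<inter> U"
    using assms(2) unfolding U_def by blast
  moreover have "a (2 * n + 1) \<notin> mball (a (2 * m)) (\<rho> (2 * m))" for m n
  proof -
    have "2 * m \<noteq> 2 * n + 1"
      by presburger
    then show ?thesis
      using assms(5) by (simp add: not_less)
  qed
  then have "range (\<lambda>n. a (2 * n + 1)) \<subseteq> A - U"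
    using assms(2) unfolding U_def by blast
  moreover have "inj (\<lambda>n. a (2 * n))" "inj (\<lambda>n. a (2 * n + 1))"
    by (simp_all add: inj_def inj_eq[OF assms(1)])
  ultimately have "splits U A"
    unfolding splits_def by (meson infinite_super range_inj_infinite)
  moreover have "openin mtopology U"
    unfolding U_def by blast
  ultimately show ?thesis
    by blast
qed

lemma limit_point_openin_splits:
  assumes "A \<subseteq> M" "x \<in> mtopology derived_set_of A"
  shows "\<exists>U. openin mtopology U \<and> splits U A"
proof -
  obtain a :: "nat \<Rightarrow> 'a" where a: "inj a" "\<And>n. a n \<in> A \<inter> M" "\<And>n. 0 < d x (a n)"
    "\<And>m n. m < n \<Longrightarrow> d x (a n) < d x (a m) / 2"
    using limit_point_halving_seq[of x "\<lambda>_. A", OF assms(2)] by blast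
  have "x \<in> M"
    using assms(2) by (simp add: metric_derived_set_of)
  have tri: "d x (a i) \<le> d x (a j) + d (a i) (a j)" for i j
    using triangle[of x "a j" "a i"] commute[of "a j" "a i"] a(2) \<open>x \<in> M\<close> by simp
  have sep: "d x (a i) / 4 \<le> d (a i) (a j)" if "i \<noteq> j" for i j
  proof (cases "i < j")
    case True
    then show ?thesis
      using tri[of i j] a(4)[of i j] a(3)[of i] by linarith
  next
    case False
    then show ?thesis
      using tri[of j i] commute[of "a i" "a j"] a(4)[of j i] a(3)[of i] that by simp
  qed
  have "range a \<subseteq> A"
    using a(2) by blast
  then show ?thesis
    using separated_seq_splits[of a A "\<lambda>i. d x (a i) / 4", OF a(1) _ assms(1)] a(3) sep by simp
qed

lemma discrete_openin_splits:
  assumes "A \<subseteq> M" "infinite A" "mtopology derived_set_of A = {}"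
  shows "\<exists>U. openin mtopology U \<and> splits U A"
proof -
  have isolated: "\<exists>e>0. \<forall>y\<in>A. y \<noteq> z \<longrightarrow> e \<le> d z y" if "z \<in> A" for z
  proof -
    have "z \<in> M" "z \<notin> mtopology derived_set_of A"
      using that assms(1,3) by auto
    then obtain e where "e > 0" "\<forall>y\<in>A. y \<noteq> z \<longrightarrow> y \<notin> mball z e"
      unfolding metric_derived_set_of by blast
    then show ?thesis
      using \<open>z \<in> M\<close> assms(1) by (auto simp: not_less)
  qed
  define e where "e z = (SOME e. e > 0 \<and> (\<forall>y\<in>A. y \<noteq> z \<longrightarrow> e \<le> d z y))" for z
  have e: "e z > 0 \<and> (\<forall>y\<in>A. y \<noteq> z \<longrightarrow> e z \<le> d z y)" if "z \<in> A" for z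
    unfolding e_def by (rule someI_ex) (rule isolated[OF that])
  obtain a :: "nat \<Rightarrow> 'a" where a: "inj a" "range a \<subseteq> A"
    using infinite_countable_subset assms(2) by blast
  have pos: "0 < e (a n)" for n
    using e a(2) by blast
  have sep: "e (a i) \<le> d (a i) (a j)" if "i \<noteq> j" for i j
  proof -
    have "a j \<noteq> a i" "a i \<in> A" "a j \<in> A"
      using a that by (auto simp: inj_eq)
    then show ?thesis
      using e[of "a i"] by blast
  qed
  show ?thesis
    by (rule separated_seq_splits[of a A "\<lambda>i. e (a i)", OF a assms(1) pos sep])
qed

lemma ex_openin_splits:
  assumes "A \<subseteq> M" "infinite A"
  shows "\<exists>U. openin mtopology U \<and> splits U A"
  using limit_point_openin_splits[OF assms(1)] discrete_openin_splits[OF assms] by blast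

section \<open>Cantor sets in complete separable metric spaces\<close>

lemma countable_non_condensation_points:
  assumes "countable D" "D \<subseteq> M" "\<forall>x\<in>M. \<forall>r>0. \<exists>y\<in>D. d x y < r"
  shows "countable {x \<in> M. \<exists>e>0. countable (mball x e)}"
proof -
  define \<B> where "\<B> = (\<lambda>(q, r). mball q r) ` {(q, r) \<in> D \<times> \<rat>. countable (mball q r)}"
  have "countable {(q, r) \<in> D \<times> \<rat>. countable (mball q r)}"
    using assms(1) countable_rat by (auto intro: countable_subset[of _ "D \<times> \<rat>"])
  then have "countable \<B>"
    unfolding \<B>_def by (rule countable_image)
  moreover have "countable B" if "B \<in> \<B>" for B
    using that unfolding \<B>_def by auto
  ultimately have "countable (\<Union>\<B>)"
    using countable_UN[of \<B> "\<lambda>B. B"] by simp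
  moreover have "x \<in> \<Union>\<B>" if x: "x \<in> M" and e: "e > 0" and cnt: "countable (mball x e)" for x e
  proof -
    have "e / 3 > 0"
      using e by simp
    then obtain q where q: "q \<in> D" "d x q < e / 3"
      using assms(3) x by blast
    obtain r where r: "r \<in> \<rat>" "e / 3 < r" "r < 2 * e / 3"
      using Rats_dense_in_real[of "e / 3" "2 * e / 3"] e by auto
    have "q \<in> M"
      using q(1) assms(2) by blast
    have "mball q r \<subseteq> mball x e"
    proof
      fix z assume "z \<in> mball q r"
      then show "z \<in> mball x e"
        using triangle[of x q z] x \<open>q \<in> M\<close> q(2) r(3) by auto
    qed
    then have "countable (mball q r)"
      using cnt countable_subset by blast
    moreover have "x \<in> mball q r"
      using x \<open>q \<in> M\<close> q(2) r(2) commute[of q x] by auto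
    ultimately show ?thesis
      unfolding \<B>_def using q(1) r(1) by blast
  qed
  ultimately show ?thesis
    by (blast intro: countable_subset)
qed

lemma ex_perfect_subset:
  assumes "countable D" "D \<subseteq> M" "\<forall>x\<in>M. \<forall>r>0. \<exists>y\<in>D. d x y < r" "uncountable M"
  obtains P where "P \<noteq> {}" "P \<subseteq> mtopology derived_set_of P"
proof -
  define P where "P = {x \<in> M. \<forall>e>0. uncountable (mball x e)}"
  have "M - P = {x \<in> M. \<exists>e>0. countable (mball x e)}"
    unfolding P_def by blast
  then have rest: "countable (M - P)"
    using countable_non_condensation_points[OF assms(1-3)] by simp
  then have "P \<noteq> {}"
    using assms(4) by auto
  moreover have "x \<in> mtopology derived_set_of P" if "x \<in> P" for x
    unfolding metric_derived_set_of
  proof (intro CollectI conjI allI impI)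
    show "x \<in> M"
      using that unfolding P_def by blast
    fix r :: real assume "r > 0"
    then have "uncountable (mball x r)"
      using that unfolding P_def by blast
    moreover have "mball x r \<subseteq> (mball x r \<inter> P - {x}) \<union> insert x (M - P)"
      by auto
    ultimately have "uncountable (mball x r \<inter> P - {x})"
      using rest countable_subset by (metis countable_Un_iff countable_insert)
    then have "mball x r \<inter> P - {x} \<noteq> {}"
      by (metis countable_empty)
    then show "\<exists>y\<in>P. y \<noteq> x \<and> y \<in> mball x r"
      by blast
  qed
  ultimately show ?thesis
    using that by blast
qed

lemma mcomplete_nested_mcballs:
  assumes "mcomplete" "\<And>n. c n \<in> M" "\<And>n. 0 \<le> r n" "\<And>n. r n \<le> (1/2) ^ n"
    and "\<And>n. mcball (c (Suc n)) (r (Suc n)) \<subseteq> mcball (c n) (r n)"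
  shows "\<exists>y. \<forall>n. y \<in> mcball (c n) (r n)"
proof -
  have "\<exists>n a. mcball (c n) (r n) \<subseteq> mcball a e" if e: "e > 0" for e
  proof -
    obtain n where "(1/2::real) ^ n < e"
      using real_arch_pow_inv[of e "1/2"] e by auto
    then have "mcball (c n) (r n) \<subseteq> mcball (c n) e"
      using assms(4)[of n] by (intro mcball_subset_concentric) simp
    then show ?thesis
      by blast
  qed
  moreover have "decseq (\<lambda>n. mcball (c n) (r n))"
    using assms(5) by (rule decseq_SucI)
  moreover have "mcball (c n) (r n) \<noteq> {}" for n
    using assms(2,3) centre_in_mcball_iff by blast
  ultimately have "\<Inter> (range (\<lambda>n. mcball (c n) (r n))) \<noteq> {}"
    using assms(1) unfolding mcomplete_nest by (simp add: closedin_mcball)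
  then show ?thesis
    by blast
qed

lemma Cantor_scheme_embedding:
  fixes c :: "(nat \<Rightarrow> bool) \<Rightarrow> nat \<Rightarrow> 'a" and r :: "(nat \<Rightarrow> bool) \<Rightarrow> nat \<Rightarrow> real"
  assumes "mcomplete" "\<And>\<sigma> n. c \<sigma> n \<in> M" "\<And>\<sigma> n. 0 \<le> r \<sigma> n" "\<And>\<sigma> n. r \<sigma> n \<le> (1/2) ^ n"
    and nested: "\<And>\<sigma> n. mcball (c \<sigma> (Suc n)) (r \<sigma> (Suc n)) \<subseteq> mcball (c \<sigma> n) (r \<sigma> n)"
    and agree: "\<And>\<sigma> \<tau> n. \<forall>i<n. \<sigma> i = \<tau> i \<Longrightarrow> c \<sigma> n = c \<tau> n \<and> r \<sigma> n = r \<tau> n"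
    and branch: "\<And>\<sigma> \<tau> n. \<forall>i<n. \<sigma> i = \<tau> i \<Longrightarrow> \<sigma> n \<noteq> \<tau> n \<Longrightarrow>
      disjnt (mcball (c \<sigma> (Suc n)) (r \<sigma> (Suc n))) (mcball (c \<tau> (Suc n)) (r \<tau> (Suc n)))"
  shows "\<exists>f. continuous_map Cantor_space mtopology f \<and> inj f"
proof -
  define f where "f \<sigma> = (SOME y. \<forall>n. y \<in> mcball (c \<sigma> n) (r \<sigma> n))" for \<sigma>
  have "\<exists>y. \<forall>n. y \<in> mcball (c \<sigma> n) (r \<sigma> n)" for \<sigma>
    using assms(1-4) nested by (rule mcomplete_nested_mcballs)
  then have f: "f \<sigma> \<in> mcball (c \<sigma> n) (r \<sigma> n)" for \<sigma> n
    unfolding f_def using someI_ex[of "\<lambda>y. \<forall>n. y \<in> mcball (c \<sigma> n) (r \<sigma> n)"] by blast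
  have "inj f"
  proof (rule injI)
    fix \<sigma> \<tau> assume eq: "f \<sigma> = f \<tau>"
    show "\<sigma> = \<tau>"
    proof (rule ccontr)
      assume "\<sigma> \<noteq> \<tau>"
      then have "\<exists>i. \<sigma> i \<noteq> \<tau> i"
        by auto
      then obtain n where "\<sigma> n \<noteq> \<tau> n" "\<forall>i<n. \<sigma> i = \<tau> i"
        unfolding exists_least_iff[of "\<lambda>i. \<sigma> i \<noteq> \<tau> i"] by blast
      then show False
        using branch f[of \<sigma> "Suc n"] f[of \<tau> "Suc n"] eq by (metis disjnt_iff)
    qed
  qed
  moreover have "continuous_map Cantor_space mtopology f"
    unfolding continuous_map_to_metric
  proof (intro ballI allI impI)
    fix \<sigma> :: "nat \<Rightarrow> bool" and e :: real assume "e > 0"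
    then obtain n where n: "2 * (1/2::real) ^ n < e"
      using real_arch_pow_inv[of "e / 2" "1/2"] by (auto simp: mult.commute)
    have "f \<tau> \<in> mball (f \<sigma>) e" if "\<forall>i<n. \<tau> i = \<sigma> i" for \<tau>
    proof -
      have "f \<tau> \<in> mcball (c \<sigma> n) (r \<sigma> n)" "f \<sigma> \<in> mcball (c \<sigma> n) (r \<sigma> n)"
        using f[of \<tau> n] f[of \<sigma> n] agree[OF that] by auto
      then have "d (f \<sigma>) (f \<tau>) \<le> 2 * r \<sigma> n"
        using triangle[of "f \<sigma>" "c \<sigma> n" "f \<tau>"] commute[of "f \<sigma>" "c \<sigma> n"] by auto
      then show ?thesis
        using assms(4)[of \<sigma> n] n f[of \<sigma> n] f[of \<tau> n] by auto
    qed
    then show "\<exists>U. openin Cantor_space U \<and> \<sigma> \<in> U \<and> (\<forall>\<tau>\<in>U. f \<tau> \<in> mball (f \<sigma>) e)"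
      using openin_Cantor_space_cylinder[of n \<sigma>] by blast
  qed
  ultimately show ?thesis
    by blast
qed

lemma perfect_set_split_mcball:
  assumes "P \<subseteq> mtopology derived_set_of P" "c \<in> P" "0 < r"
  shows "\<exists>v \<rho>. v \<in> P \<and> 0 < \<rho> \<and> \<rho> \<le> r / 2 \<and> mcball v \<rho> \<subseteq> mcball c r \<and>
    disjnt (mcball c \<rho>) (mcball v \<rho>)"
proof -
  have "c \<in> mtopology derived_set_of P"
    using assms(1,2) by blast
  moreover have "r / 2 > 0"
    using assms(3) by simp
  ultimately obtain v where v: "v \<in> P" "v \<noteq> c" "v \<in> mball c (r / 2)"
    unfolding metric_derived_set_of by blast
  define \<rho> where "\<rho> = min (r / 2) (d c v / 3)"
  have "c \<in> M" "v \<in> M" "0 < d c v"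
    using v by auto
  then have "0 < \<rho>"
    using assms(3) by (simp add: \<rho>_def)
  moreover have "mcball v \<rho> \<subseteq> mcball c r"
  proof
    fix z assume "z \<in> mcball v \<rho>"
    then show "z \<in> mcball c r"
      using triangle[of c v z] \<open>c \<in> M\<close> v(3) by (auto simp: \<rho>_def)
  qed
  moreover have False if "z \<in> mcball c \<rho>" "z \<in> mcball v \<rho>" for z
    using that triangle[of c z v] commute[of v z] \<open>0 < d c v\<close> by (auto simp: \<rho>_def)
  then have "disjnt (mcball c \<rho>) (mcball v \<rho>)"
    by (auto simp: disjnt_iff)
  moreover have "\<rho> \<le> r / 2"
    by (simp add: \<rho>_def)
  ultimately show ?thesis
    using v(1) by blast
qed

lemma perfect_set_Cantor_embedding:
  assumes "mcomplete" "P \<noteq> {}" "P \<subseteq> mtopology derived_set_of P"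
  shows "\<exists>f. continuous_map Cantor_space mtopology f \<and> inj f"
proof -
  obtain x\<^sub>0 where "x\<^sub>0 \<in> P"
    using assms(2) by blast
  obtain v \<rho> where split: "\<And>c r. c \<in> P \<Longrightarrow> 0 < r \<Longrightarrow> v c r \<in> P \<and> 0 < \<rho> c r \<and> \<rho> c r \<le> r / 2 \<and>
      mcball (v c r) (\<rho> c r) \<subseteq> mcball c r \<and> disjnt (mcball c (\<rho> c r)) (mcball (v c r) (\<rho> c r))"
    using perfect_set_split_mcball[OF assms(3)] by metis
  define node where "node \<sigma> = rec_nat (x\<^sub>0, 1)
      (\<lambda>n (c, r). if \<sigma> n then (c, \<rho> c r) else (v c r, \<rho> c r))" for \<sigma> :: "nat \<Rightarrow> bool"
  have node_0: "node \<sigma> 0 = (x\<^sub>0, 1)"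
    and node_Suc: "node \<sigma> (Suc n) =
      (case node \<sigma> n of (c, r) \<Rightarrow> if \<sigma> n then (c, \<rho> c r) else (v c r, \<rho> c r))" for \<sigma> n
    by (simp_all add: node_def)
  have inv: "fst (node \<sigma> n) \<in> P \<and> 0 < snd (node \<sigma> n) \<and> snd (node \<sigma> n) \<le> (1/2) ^ n" for \<sigma> n
  proof (induction n)
    case 0
    then show ?case
      using \<open>x\<^sub>0 \<in> P\<close> by (simp add: node_0)
  next
    case (Suc n)
    then show ?case
      using split[of "fst (node \<sigma> n)" "snd (node \<sigma> n)"] by (auto simp: node_Suc split: prod.split)
  qed
  have node_agree: "node \<sigma> n = node \<tau> n" if "\<forall>i<n. \<sigma> i = \<tau> i" for \<sigma> \<tau> n
    using that
  proof (induction n)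
    case (Suc n)
    then have "node \<sigma> n = node \<tau> n" "\<sigma> n = \<tau> n"
      by auto
    then show ?case
      by (simp add: node_Suc)
  qed (simp add: node_0)
  show ?thesis
  proof (rule Cantor_scheme_embedding[OF assms(1),
        of "\<lambda>\<sigma> n. fst (node \<sigma> n)" "\<lambda>\<sigma> n. snd (node \<sigma> n)"])
    show "fst (node \<sigma> n) \<in> M" "0 \<le> snd (node \<sigma> n)" "snd (node \<sigma> n) \<le> (1/2) ^ n" for \<sigma> n
      using inv[of \<sigma> n] assms(3) derived_set_of_subset_topspace by fastforce+
    show "mcball (fst (node \<sigma> (Suc n))) (snd (node \<sigma> (Suc n))) \<subseteq>
        mcball (fst (node \<sigma> n)) (snd (node \<sigma> n))" for \<sigma> n
      using split[of "fst (node \<sigma> n)" "snd (node \<sigma> n)"] inv[of \<sigma> n]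
      by (auto simp: node_Suc mcball_subset_concentric split: prod.split)
    show "fst (node \<sigma> n) = fst (node \<tau> n) \<and> snd (node \<sigma> n) = snd (node \<tau> n)"
      if "\<forall>i<n. \<sigma> i = \<tau> i" for \<sigma> \<tau> n
      using node_agree[OF that] by simp
    show "disjnt (mcball (fst (node \<sigma> (Suc n))) (snd (node \<sigma> (Suc n))))
        (mcball (fst (node \<tau> (Suc n))) (snd (node \<tau> (Suc n))))"
      if agree: "\<forall>i<n. \<sigma> i = \<tau> i" and differ: "\<sigma> n \<noteq> \<tau> n" for \<sigma> \<tau> n
    proof -
      obtain c r where \<sigma>: "node \<sigma> n = (c, r)" and \<tau>: "node \<tau> n = (c, r)"
        using node_agree[OF agree] by (metis surj_pair)
      then have "disjnt (mcball c (\<rho> c r)) (mcball (v c r) (\<rho> c r))"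
        using split[of c r] inv[of \<sigma> n] by simp
      then show ?thesis
        using differ by (cases "\<sigma> n") (auto simp: node_Suc \<sigma> \<tau> disjnt_sym)
    qed
  qed
qed

section \<open>Coding a separable metric space into the Cantor space\<close>

lemma continuous_map_mball_indicator:
  assumes "c \<in> M" "\<forall>y\<in>S. d y c \<noteq> r"
  shows "continuous_map (subtopology mtopology S) (discrete_topology UNIV) (\<lambda>y. d y c < r)"
proof -
  have "{y \<in> topspace (subtopology mtopology S). d y c < r} = mball c r \<inter> S"
    using assms(1) by (auto simp: commute)
  moreover have "{y \<in> topspace (subtopology mtopology S). \<not> d y c < r} = (M - mcball c r) \<inter> S"
    using assms by (auto simp: commute)
  moreover have "openin mtopology (M - mcball c r)"
    using openin_diff[OF openin_topspace[of mtopology] closedin_mcball[of c r]] by simp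
  ultimately show ?thesis
    unfolding continuous_map_into_discrete_bool by (simp add: openin_subtopology_Int)
qed

definition ball_code :: "(nat \<Rightarrow> 'a \<times> real) \<Rightarrow> real \<Rightarrow> 'a \<Rightarrow> nat \<Rightarrow> bool" where
  "ball_code s t y m \<longleftrightarrow> d y (fst (s m)) < snd (s m) + t"

definition off_spheres :: "(nat \<Rightarrow> 'a \<times> real) \<Rightarrow> real \<Rightarrow> 'a set" where
  "off_spheres s t = {y \<in> M. \<forall>m. d y (fst (s m)) \<noteq> snd (s m) + t}"

lemma ex_inj_ball_code:
  assumes "countable D" "D \<subseteq> M" "\<forall>x\<in>M. \<forall>r>0. \<exists>y\<in>D. d x y < r" "M \<noteq> {}"
  shows "\<exists>s. (\<forall>m. fst (s m) \<in> M) \<and> (\<forall>t. inj_on (ball_code s t) M)"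
proof -
  have "D \<noteq> {}"
    using assms(3,4) zero_less_one by blast
  define s :: "nat \<Rightarrow> 'a \<times> real" where "s = from_nat_into (D \<times> \<rat>)"
  have "countable (D \<times> (\<rat> :: real set))"
    using assms(1) countable_rat by blast
  then have s_onto: "\<exists>m. s m = (q, p)" if "q \<in> D" "p \<in> \<rat>" for q p
    unfolding s_def using that from_nat_into_surj[of "D \<times> \<rat>" "(q, p)"] by simp
  have "D \<times> (\<rat> :: real set) \<noteq> {}"
    using \<open>D \<noteq> {}\<close> Rats_0 by blast
  then have "s m \<in> D \<times> \<rat>" for m
    unfolding s_def by (rule from_nat_into)
  then have "fst (s m) \<in> M" for m
    using assms(2) by (auto simp: mem_Times_iff)
  moreover have "ball_code s t y \<noteq> ball_code s t y'"
    if y: "y \<in> M" "y' \<in> M" "y \<noteq> y'" for t y y'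
  proof -
    have "0 < d y y' / 3"
      using y by simp
    then obtain q where q: "q \<in> D" "d y q < d y y' / 3"
      using assms(3) y(1) by blast
    have "q \<in> M"
      using q(1) assms(2) by blast
    then have "d y y' \<le> d y q + d y' q"
      using triangle[OF y(1) _ y(2), of q] commute[of q y'] by simp
    then have "d y q < d y' q"
      using q(2) \<open>0 < d y y' / 3\<close> by linarith
    then obtain p where p: "p \<in> \<rat>" "d y q - t < p" "p < d y' q - t"
      using Rats_dense_in_real[of "d y q - t" "d y' q - t"] by auto
    obtain m where "s m = (q, p)"
      using s_onto q(1) p(1) by blast
    then have "ball_code s t y m \<noteq> ball_code s t y' m"
      using p(2,3) by (simp add: ball_code_def)
    then show ?thesis
      by metis
  qed
  then have "inj_on (ball_code s t) M" for t
    by (meson inj_onI)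
  ultimately show ?thesis
    by blast
qed

lemma continuous_map_ball_code:
  assumes "\<forall>m. fst (s m) \<in> M"
  shows "continuous_map (subtopology mtopology (off_spheres s t)) Cantor_space (ball_code s t)"
proof -
  have "continuous_map (subtopology mtopology (off_spheres s t)) (discrete_topology UNIV)
      (\<lambda>y. d y (fst (s m)) < snd (s m) + t)" for m
    by (rule continuous_map_mball_indicator) (use assms in \<open>auto simp: off_spheres_def\<close>)
  then show ?thesis
    unfolding Cantor_space_def continuous_map_componentwise_UNIV ball_code_def by blast
qed

lemma countable_not_off_spheres:
  assumes "A \<subseteq> M" "countable A"
  shows "countable {t. \<not> A \<subseteq> off_spheres s t}"
proof -
  have "t \<in> (\<lambda>(a, m). d a (fst (s m)) - snd (s m)) ` (A \<times> UNIV)"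
    if t: "\<not> A \<subseteq> off_spheres s t" for t
  proof -
    obtain a m where "a \<in> A" "d a (fst (s m)) = snd (s m) + t"
      using t assms(1) unfolding off_spheres_def by blast
    then have "t = (\<lambda>(a, m). d a (fst (s m)) - snd (s m)) (a, m)"
      by simp
    then show ?thesis
      using \<open>a \<in> A\<close> by blast
  qed
  then have "{t. \<not> A \<subseteq> off_spheres s t} \<subseteq> (\<lambda>(a, m). d a (fst (s m)) - snd (s m)) ` (A \<times> UNIV)"
    by blast
  moreover have "countable (A \<times> (UNIV :: nat set))"
    using assms(2) by blast
  ultimately show ?thesis
    using countable_image countable_subset by blast
qed

lemma splitting_family_from_Cantor_space:
  assumes "countable D" "D \<subseteq> M" "\<forall>x\<in>M. \<forall>r>0. \<exists>y\<in>D. d x y < r"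
    and \<V>: "splitting_family Cantor_space \<V>" and T: "uncountable (T :: real set)"
  shows "\<exists>\<U>. splitting_family mtopology \<U> \<and> |\<U>| \<le>o |T \<times> \<V>|"
proof (cases "M = {}")
  case True
  then have "splitting_family mtopology {}"
    unfolding splitting_family_def topspace_mtopology by simp
  then show ?thesis
    using card_of_empty by blast
next
  case False
  then obtain s where s: "\<forall>m. fst (s m) \<in> M" "\<forall>t. inj_on (ball_code s t) M"
    using ex_inj_ball_code[OF assms(1-3)] by blast
  have "\<exists>\<W>. (\<forall>W\<in>\<W>. openin mtopology W) \<and> |\<W>| \<le>o |\<V>| \<and>
      (\<forall>A. A \<subseteq> off_spheres s t \<and> infinite A \<longrightarrow> (\<exists>W\<in>\<W>. splits W A))" for t
  proof (rule splitting_family_pullback[OF continuous_map_ball_code[OF s(1)] _ _ \<V>])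
    have "off_spheres s t \<subseteq> M"
      unfolding off_spheres_def by blast
    then show "inj_on (ball_code s t) (off_spheres s t)" "off_spheres s t \<subseteq> topspace mtopology"
      using inj_on_subset[of "ball_code s t" M] s(2) by auto
  qed
  then obtain \<W> where \<W>: "\<And>t. (\<forall>W\<in>\<W> t. openin mtopology W) \<and> |\<W> t| \<le>o |\<V>| \<and>
      (\<forall>A. A \<subseteq> off_spheres s t \<and> infinite A \<longrightarrow> (\<exists>W\<in>\<W> t. splits W A))"
    by metis
  have "|\<Union>t\<in>T. \<W> t| \<le>o |SIGMA t : T. \<W> t|"
    by (rule card_of_UNION_Sigma)
  also have "|SIGMA t : T. \<W> t| \<le>o |T \<times> \<V>|"
    using \<W> by (intro card_of_Sigma_mono1) blast
  finally have "|\<Union>t\<in>T. \<W> t| \<le>o |T \<times> \<V>|" .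
  moreover have "splitting_family mtopology (\<Union>t\<in>T. \<W> t)"
  proof (rule splitting_familyI_countable)
    show "openin mtopology U" if "U \<in> (\<Union>t\<in>T. \<W> t)" for U
      using that \<W> by blast
    fix A assume A: "A \<subseteq> topspace mtopology" "countable A" "infinite A"
    have "\<not> T \<subseteq> {t. \<not> A \<subseteq> off_spheres s t}"
      using countable_not_off_spheres[of A s] A T countable_subset by auto
    then obtain t where "t \<in> T" "A \<subseteq> off_spheres s t"
      by blast
    then show "\<exists>U\<in>(\<Union>t\<in>T. \<W> t). splits U A"
      using \<W>[of t] A(3) by blast
  qed
  ultimately show ?thesis
    by blast
qed

end

section \<open>Polish spaces\<close>

lemma metrizable_space_splitting_family:
  assumes "metrizable_space X"
  shows "splitting_family X {U. openin X U}"
proof -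
  obtain M d where m: "Metric_space M d" "X = Metric_space.mtopology M d"
    using assms unfolding metrizable_space_def by blast
  interpret Metric_space M d
    by (rule m(1))
  show ?thesis
    unfolding splitting_family_def m(2) topspace_mtopology using ex_openin_splits by blast
qed

lemma Polish_space_dense_metric:
  assumes "Polish_space X"
  shows "\<exists>M d D. Metric_space M d \<and> Metric_space.mcomplete M d \<and> X = Metric_space.mtopology M d \<and>
    countable D \<and> D \<subseteq> M \<and> (\<forall>x\<in>M. \<forall>r>0. \<exists>y\<in>D. d x y < r)"
proof -
  obtain M d where m: "Metric_space M d" "Metric_space.mcomplete M d"
    "X = Metric_space.mtopology M d"
    using assms unfolding Polish_space_def completely_metrizable_space_def by blast
  interpret Metric_space M d
    by (rule m(1))
  obtain D where "countable D" "D \<subseteq> M" "mtopology closure_of D = M"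
    using assms unfolding Polish_space_def separable_space_def m(3) by auto
  moreover have "\<forall>x\<in>M. \<forall>r>0. \<exists>y\<in>D. d x y < r"
    using calculation(3) unfolding metric_closure_of by (force simp: commute)
  ultimately show ?thesis
    using m by blast
qed

lemma uncountable_Polish_space_perfect_subset:
  assumes "Polish_space Y" "uncountable (topspace Y)"
  obtains M d P where "Metric_space M d" "Metric_space.mcomplete M d"
    "Y = Metric_space.mtopology M d"
    "P \<noteq> {}" "P \<subseteq> Metric_space.mtopology M d derived_set_of P"
proof -
  obtain M d D where "Metric_space M d" "Metric_space.mcomplete M d"
    and Y: "Y = Metric_space.mtopology M d"
    and D: "countable D" "D \<subseteq> M" "\<forall>x\<in>M. \<forall>r>0. \<exists>y\<in>D. d x y < r"
    using Polish_space_dense_metric[OF assms(1)] by blast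
  interpret Metric_space M d
    by fact
  have "uncountable M"
    using assms(2) unfolding Y by simp
  then obtain P where "P \<noteq> {}" "P \<subseteq> mtopology derived_set_of P"
    by (rule ex_perfect_subset[OF D])
  then show ?thesis
    using that \<open>Metric_space M d\<close> \<open>mcomplete\<close> Y by blast
qed

lemma uncountable_Polish_space_Cantor_embedding:
  assumes "Polish_space Y" "uncountable (topspace Y)"
  shows "\<exists>f. continuous_map Cantor_space Y f \<and> inj f"
proof -
  obtain M d P where "Metric_space M d" "Metric_space.mcomplete M d"
    "Y = Metric_space.mtopology M d"
    "P \<noteq> {}" "P \<subseteq> Metric_space.mtopology M d derived_set_of P"
    by (rule uncountable_Polish_space_perfect_subset[OF assms])
  then show ?thesis
    using Metric_space.perfect_set_Cantor_embedding by blast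
qed

lemma uncountable_Polish_space_splitting_family:
  assumes "Polish_space Y" "uncountable (topspace Y)" "splitting_family Y \<V>"
  shows "uncountable \<V>"
proof -
  obtain M d P where "Metric_space M d" and Y: "Y = Metric_space.mtopology M d"
    and P: "P \<noteq> {}" "P \<subseteq> Metric_space.mtopology M d derived_set_of P"
    by (rule uncountable_Polish_space_perfect_subset[OF assms(1,2)])
  interpret Metric_space M d
    by fact
  have "P \<subseteq> M"
    using P(2) derived_set_of_subset_topspace[of mtopology P] by auto
  then have "mtopology derived_set_of M \<noteq> {}"
    using P derived_set_of_mono[of P M mtopology] by blast
  then show ?thesis
    using uncountable_splitting_family assms(3) unfolding Y by blast
qed

lemma Polish_splitting_family_ordLeq:
  fixes X :: "'a topology" and Y :: "'b topology"
  assumes "Polish_space X" "Polish_space Y" "uncountable (topspace Y)"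
    and \<V>: "splitting_family Y \<V>"
  shows "\<exists>\<U>. splitting_family X \<U> \<and> |\<U>| \<le>o |\<V>|"
proof -
  obtain f where "continuous_map Cantor_space Y f" "inj_on f (topspace Cantor_space)"
    using uncountable_Polish_space_Cantor_embedding[OF assms(2,3)] by auto
  then obtain \<V>\<^sub>C where \<V>\<^sub>C: "splitting_family Cantor_space \<V>\<^sub>C" "|\<V>\<^sub>C| \<le>o |\<V>|"
    using splitting_family_embedding \<V> by blast
  have "uncountable \<V>"
    by (rule uncountable_Polish_space_splitting_family[OF assms(2-4)])
  then obtain T :: "real set" where T: "uncountable T" "|T| \<le>o |\<V>|"
    by (rule ex_uncountable_real_set_ordLeq)
  obtain M d D where "Metric_space M d" and X: "X = Metric_space.mtopology M d"
    and D: "countable D" "D \<subseteq> M" "\<forall>x\<in>M. \<forall>r>0. \<exists>y\<in>D. d x y < r"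
    using Polish_space_dense_metric[OF assms(1)] by blast
  then obtain \<U> where "splitting_family X \<U>" "|\<U>| \<le>o |T \<times> \<V>\<^sub>C|"
    using Metric_space.splitting_family_from_Cantor_space[OF _ D \<V>\<^sub>C(1) T(1)] by blast
  moreover have "|T \<times> \<V>\<^sub>C| \<le>o |\<V>|"
    using \<open>uncountable \<V>\<close> countable_finite card_of_Times_ordLeq_infinite[OF _ T(2) \<V>\<^sub>C(2)]
    by blast
  ultimately show ?thesis
    by (blast intro: ordLeq_transitive)
qed

lemma Polish_splitting_number_ordLeq:
  assumes "Polish_space X" "Polish_space Y" "uncountable (topspace Y)"
  shows "splitting_number X \<le>o splitting_number Y"
proof (rule splitting_number_ordLeq)
  show "splitting_family Y {U. openin Y U}"
    using assms(2) unfolding Polish_space_def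
    by (intro metrizable_space_splitting_family completely_metrizable_imp_metrizable_space) blast
  show "\<exists>\<U>. splitting_family X \<U> \<and> |\<U>| \<le>o |\<V>|" if "splitting_family Y \<V>" for \<V>
    using Polish_splitting_family_ordLeq[OF assms that] .
qed

theorem theorem2p5:
  fixes X :: "'a topology" and Y :: "'b topology"
  assumes "Polish_space X" and "uncountable (topspace X)"
      and "Polish_space Y" and "uncountable (topspace Y)"
  shows "splitting_number X =o splitting_number Y"
  using Polish_splitting_number_ordLeq[OF assms(1,3,4)]
    Polish_splitting_number_ordLeq[OF assms(3,1,2)]
  by (simp add: ordIso_iff_ordLeq)

end
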